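(* Let $1\le p<\infty$ and let $(X,\mathcal B,\mu,f)$ be a dissipative system of bounded distortion generated by $W$. There exists $L\in\mathbb R$ such that for all $n,k\in\mathbb Z$ and all $\varphi\in L^p(X)$, \[ \frac1L\,\frac{\mu(f^k(W))}{\mu(f^{k+n}(W))}\int_{f^{k+n}(W)}|\varphi|^p\,d\mu\le\int_{f^k(W)}|\varphi|^p\circ f^n\,d\mu\le L\,\frac{\mu(f^k(W))}{\mu(f^{k+n}(W))}\int_{f^{k+n}(W)}|\varphi|^p\,d\mu. \]
   Context: $(X,\mathcal B,\mu)$ is $\sigma$-finite, $f:X\to X$ is bimeasurable invertible with Radon–Nikodym derivatives of $\mu\circ f$ and $\mu\circ f^{-1}$ w.r.t. $\mu$ bounded below. Dissipative generated by $W$: $W\in\mathcal B$, $0<\mu(W)<\infty$, $X=\dot\bigcup_{k\in\mathbb Z}f^k(W)$ (pairwise disjoint). Bounded distortion: there is $K>0$ with $\frac1K\frac{\mu(f^k(W))}{\mu(W)}\le\frac{\mu(f^k(B))}{\mu(B)}\le K\frac{\mu(f^k(W))}{\mu(W)}$ for all $k\in\mathbb Z$ and measurable $B\subseteq W$ with $\mu(B)>0$. *)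

theory Defs
  imports "HOL-Probability.Probability"
begin

definition ipow :: "('a \<Rightarrow> 'a) \<Rightarrow> ('a \<Rightarrow> 'a) \<Rightarrow> int \<Rightarrow> 'a \<Rightarrow> 'a" where
  "ipow f g k = (if 0 \<le> k then f ^^ nat k else g ^^ nat (- k))"

end

theory Submission
  imports Defs
begin

text \<open>For a measurable set C, the push-forward under f^n of \<mu> restricted to f^k(W) gives C the
  mass \<mu>(f^k(B)), while \<mu> restricted to f^(k+n)(W) gives it \<mu>(f^(k+n)(B)), where B is the set of
  points of W that f^(k+n) maps into C. Bounded distortion at the times k and k+n compares both
  masses with \<mu>(B), so the two measures agree up to the factor \<mu>(f^k(W)) / \<mu>(f^(k+n)(W)) and an
  error of at most K^2 either way; integrating |\<phi>|^p gives the claim with L = K^2.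
  Nonsingularity of f only keeps images of null sets null and images of sets of finite measure
  finite, so that all these masses are real numbers.\<close>

lemma measurable_funpow: "h \<in> M \<rightarrow>\<^sub>M M \<Longrightarrow> h ^^ m \<in> M \<rightarrow>\<^sub>M M"
  by (induction m) auto

lemma emeasure_ge_of_RN_deriv_ge:
  assumes "sigma_finite_measure M" "absolutely_continuous M N" "sets N = sets M"
    and "AE x in M. c \<le> RN_deriv M N x" and A: "A \<in> sets M"
  shows "c * emeasure M A \<le> emeasure N A"
proof -
  have "c * emeasure M A = (\<integral>\<^sup>+ x. c * indicator A x \<partial>M)"
    using A by (simp add: nn_integral_cmult_indicator)
  also have "\<dots> \<le> (\<integral>\<^sup>+ x. RN_deriv M N x * indicator A x \<partial>M)"
    using assms(4) by (intro nn_integral_mono_AE) (auto split: split_indicator)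
  also have "\<dots> = emeasure (density M (RN_deriv M N)) A"
    using A by (simp add: emeasure_density)
  also have "\<dots> = emeasure N A"
    using sigma_finite_measure.density_RN_deriv[OF assms(1-3)] by simp
  finally show ?thesis .
qed

lemma nn_integral_mono_emeasure:
  assumes sets: "sets N = sets N'" and le: "\<And>A. A \<in> sets N \<Longrightarrow> emeasure N A \<le> emeasure N' A"
  shows "integral\<^sup>N N h \<le> integral\<^sup>N N' h"
proof (rule nn_integral_mono_measure[OF sets])
  have "emeasure N A \<le> emeasure N' A" for A
    using le emeasure_notin_sets[of A N] by (cases "A \<in> sets N") auto
  then show "N \<le> N'"
    using sets sets_eq_imp_space_eq[OF sets] by (simp add: le_measure_iff le_fun_def)
qed

lemma nn_set_integral_comp_bounds:
  assumes T: "T \<in> M \<rightarrow>\<^sub>M N" and A: "A \<in> sets M" and D: "D \<in> sets N"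
    and h: "h \<in> borel_measurable N"
  shows "(\<And>C. C \<in> sets N \<Longrightarrow> emeasure M (T -` C \<inter> A) \<le> c * emeasure N (D \<inter> C))
      \<Longrightarrow> (\<integral>\<^sup>+ x \<in> A. h (T x) \<partial>M) \<le> c * (\<integral>\<^sup>+ y \<in> D. h y \<partial>N)"
    and "(\<And>C. C \<in> sets N \<Longrightarrow> c * emeasure N (D \<inter> C) \<le> emeasure M (T -` C \<inter> A))
      \<Longrightarrow> c * (\<integral>\<^sup>+ y \<in> D. h y \<partial>N) \<le> (\<integral>\<^sup>+ x \<in> A. h (T x) \<partial>M)"
proof -
  define P where "P = distr (density M (indicator A)) N T"
  define Q where "Q = scale_measure c (density N (indicator D))"
  have sets_P: "sets P = sets N" and sets_Q: "sets Q = sets N"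
    by (simp_all add: P_def Q_def)
  have "(\<integral>\<^sup>+ x \<in> A. h (T x) \<partial>M) = (\<integral>\<^sup>+ x. h (T x) \<partial>density M (indicator A))"
    using A T h by (simp add: nn_integral_density mult.commute)
  also have "\<dots> = integral\<^sup>N P h"
    using T h by (simp add: P_def nn_integral_distr)
  finally have int_P: "(\<integral>\<^sup>+ x \<in> A. h (T x) \<partial>M) = integral\<^sup>N P h" .
  have int_Q: "c * (\<integral>\<^sup>+ y \<in> D. h y \<partial>N) = integral\<^sup>N Q h"
    using D h by (simp add: Q_def nn_integral_scale_measure nn_integral_density mult.commute)
  have emeasure_P: "emeasure P C = emeasure M (T -` C \<inter> A)" if C: "C \<in> sets N" for C
  proof -
    have "emeasure P C = emeasure M (A \<inter> (T -` C \<inter> space M))"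
      using T C A by (simp add: P_def emeasure_distr emeasure_restricted measurable_sets)
    also have "A \<inter> (T -` C \<inter> space M) = T -` C \<inter> A"
      using sets.sets_into_space[OF A] by blast
    finally show ?thesis .
  qed
  have emeasure_Q: "emeasure Q C = c * emeasure N (D \<inter> C)" if "C \<in> sets N" for C
    using D that by (simp add: Q_def emeasure_restricted)
  show "(\<integral>\<^sup>+ x \<in> A. h (T x) \<partial>M) \<le> c * (\<integral>\<^sup>+ y \<in> D. h y \<partial>N)"
    if "\<And>C. C \<in> sets N \<Longrightarrow> emeasure M (T -` C \<inter> A) \<le> c * emeasure N (D \<inter> C)"
    unfolding int_P int_Q using sets_P sets_Q that emeasure_P emeasure_Q
    by (intro nn_integral_mono_emeasure) simp_all
  show "c * (\<integral>\<^sup>+ y \<in> D. h y \<partial>N) \<le> (\<integral>\<^sup>+ x \<in> A. h (T x) \<partial>M)"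
    if "\<And>C. C \<in> sets N \<Longrightarrow> c * emeasure N (D \<inter> C) \<le> emeasure M (T -` C \<inter> A)"
    unfolding int_P int_Q using sets_P sets_Q that emeasure_P emeasure_Q
    by (intro nn_integral_mono_emeasure) simp_all
qed

locale measurable_automorphism =
  fixes M :: "'a measure" and f g :: "'a \<Rightarrow> 'a"
  assumes measurable_f: "f \<in> M \<rightarrow>\<^sub>M M" and measurable_g: "g \<in> M \<rightarrow>\<^sub>M M"
    and g_f: "\<And>x. x \<in> space M \<Longrightarrow> g (f x) = x"
    and f_g: "\<And>x. x \<in> space M \<Longrightarrow> f (g x) = x"
begin

abbreviation fpow :: "int \<Rightarrow> 'a \<Rightarrow> 'a" where "fpow \<equiv> ipow f g"

lemma measurable_fpow: "fpow j \<in> M \<rightarrow>\<^sub>M M"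
  unfolding ipow_def using measurable_funpow measurable_f measurable_g by auto

lemma fpow_in_space: "x \<in> space M \<Longrightarrow> fpow j x \<in> space M"
  by (rule measurable_space[OF measurable_fpow])

lemma fpow_0 [simp]: "fpow 0 x = x" and fpow_1: "fpow 1 = f" and fpow_minus_1: "fpow (-1) = g"
  by (simp_all add: ipow_def fun_eq_iff)

lemma fpow_of_nat: "fpow (int m) = f ^^ m"
  by (simp add: ipow_def)

lemma fpow_minus_of_nat: "fpow (- int m) = g ^^ m"
  by (cases "m = 0") (simp_all add: ipow_def)

lemma fpow_succ: "x \<in> space M \<Longrightarrow> fpow (j + 1) x = f (fpow j x)"
proof (cases j rule: int_cases)
  case (nonneg m)
  then have "j + 1 = int (Suc m)" by simp
  then have "fpow (j + 1) x = (f ^^ Suc m) x"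
    by (simp only: fpow_of_nat)
  then show ?thesis
    using nonneg by (simp add: fpow_of_nat)
next
  case (neg m)
  assume x: "x \<in> space M"
  have "fpow j x = g (fpow (j + 1) x)"
    using neg fpow_minus_of_nat[of "Suc m"] fpow_minus_of_nat[of m] by simp
  then show ?thesis
    using f_g fpow_in_space[OF x] by simp
qed

lemma fpow_pred: "x \<in> space M \<Longrightarrow> fpow (j - 1) x = g (fpow j x)"
  using fpow_succ[of x "j - 1"] g_f fpow_in_space by simp

lemma fpow_fpow: "x \<in> space M \<Longrightarrow> fpow i (fpow j x) = fpow (i + j) x"
proof (induction i rule: int_induct[where k = 0])
  case (step1 i)
  then have "fpow (i + 1) (fpow j x) = f (fpow (i + j) x)"
    using fpow_succ fpow_in_space by simp
  also have "\<dots> = fpow (i + 1 + j) x"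
    using fpow_succ[of x "i + j"] step1 by (simp add: ac_simps)
  finally show ?case .
next
  case (step2 i)
  then have "fpow (i - 1) (fpow j x) = g (fpow (i + j) x)"
    using fpow_pred fpow_in_space by simp
  also have "\<dots> = fpow (i - 1 + j) x"
    using fpow_pred[of x "i + j"] step2 by (simp add: algebra_simps)
  finally show ?case .
qed simp

lemma image_fpow_fpow:
  assumes "S \<subseteq> space M" shows "fpow i ` fpow j ` S = fpow (i + j) ` S"
proof -
  have "fpow i ` fpow j ` S = (\<lambda>x. fpow i (fpow j x)) ` S"
    by (simp add: image_image)
  also have "\<dots> = fpow (i + j) ` S"
    using assms fpow_fpow by (intro image_cong) auto
  finally show ?thesis .
qed

lemma image_fpow_eq_vimage:
  assumes "S \<subseteq> space M" shows "fpow j ` S = fpow (- j) -` S \<inter> space M"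
proof (intro equalityI subsetI)
  fix y assume "y \<in> fpow j ` S"
  then show "y \<in> fpow (- j) -` S \<inter> space M"
    using assms fpow_fpow fpow_in_space by auto
next
  fix y assume y: "y \<in> fpow (- j) -` S \<inter> space M"
  then have "y = fpow j (fpow (- j) y)"
    using fpow_fpow by simp
  then show "y \<in> fpow j ` S"
    using y by blast
qed

lemma sets_image_fpow:
  assumes "S \<in> sets M" shows "fpow j ` S \<in> sets M"
proof -
  have "fpow j ` S = fpow (- j) -` S \<inter> space M"
    using image_fpow_eq_vimage[OF sets.sets_into_space[OF assms]] .
  then show ?thesis
    using measurable_sets[OF measurable_fpow assms] by simp
qed

lemma vimage_fpow_Int_image:
  assumes "S \<subseteq> space M"
  shows "fpow n -` C \<inter> fpow k ` S = fpow k ` (fpow (k + n) -` C \<inter> S)"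
proof -
  have shift: "fpow n (fpow k x) = fpow (k + n) x" if "x \<in> S" for x
  proof -
    have "fpow n (fpow k x) = fpow (n + k) x"
      using assms that by (intro fpow_fpow) blast
    then show ?thesis
      by (simp only: add.commute)
  qed
  show ?thesis
  proof (intro equalityI subsetI)
    fix y assume "y \<in> fpow n -` C \<inter> fpow k ` S"
    then obtain x where "x \<in> S" "y = fpow k x" "fpow n y \<in> C"
      by blast
    then show "y \<in> fpow k ` (fpow (k + n) -` C \<inter> S)"
      using shift by auto
  next
    fix y assume "y \<in> fpow k ` (fpow (k + n) -` C \<inter> S)"
    then show "y \<in> fpow n -` C \<inter> fpow k ` S"
      using shift by auto
  qed
qed

end

locale nonsingular_automorphism = measurable_automorphism +
  assumes sigma_finite: "sigma_finite_measure M"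
    and absolutely_continuous_g: "absolutely_continuous M (distr M M g)"
    and absolutely_continuous_f: "absolutely_continuous M (distr M M f)"
    and RN_deriv_g_lower: "\<exists>c>0. AE x in M. ennreal c \<le> RN_deriv M (distr M M g) x"
    and RN_deriv_f_lower: "\<exists>c>0. AE x in M. ennreal c \<le> RN_deriv M (distr M M f) x"
begin

lemma emeasure_image_fpow_unit_ge:
  assumes d: "d \<in> {1, -1}"
  shows "\<exists>c>0. \<forall>S\<in>sets M. ennreal c * emeasure M S \<le> emeasure M (fpow d ` S)"
proof -
  have "absolutely_continuous M (distr M M (fpow (- d)))"
    and "\<exists>c>0. AE x in M. ennreal c \<le> RN_deriv M (distr M M (fpow (- d))) x"
    using d absolutely_continuous_f absolutely_continuous_g RN_deriv_f_lower RN_deriv_g_lower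
    by (auto simp: fpow_1 fpow_minus_1)
  then obtain c where c: "c > 0" "\<And>S. S \<in> sets M \<Longrightarrow>
      ennreal c * emeasure M S \<le> emeasure (distr M M (fpow (- d))) S"
    using emeasure_ge_of_RN_deriv_ge[OF sigma_finite] by (metis sets_distr)
  have "emeasure (distr M M (fpow (- d))) S = emeasure M (fpow d ` S)" if "S \<in> sets M" for S
    using emeasure_distr[OF measurable_fpow that] image_fpow_eq_vimage[OF sets.sets_into_space[OF that]]
    by simp
  then show ?thesis
    using c by auto
qed

lemma emeasure_image_fpow_unit_le:
  assumes d: "d \<in> {1, -1}"
  shows "\<exists>C<\<infinity>. \<forall>S\<in>sets M. emeasure M (fpow d ` S) \<le> C * emeasure M S"
proof -
  obtain c where c: "c > 0" "\<And>S. S \<in> sets M \<Longrightarrow> ennreal c * emeasure M S \<le> emeasure M (fpow (- d) ` S)"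
    using emeasure_image_fpow_unit_ge[of "- d"] d by auto
  have "emeasure M (fpow d ` S) \<le> ennreal (1 / c) * emeasure M S" if S: "S \<in> sets M" for S
  proof -
    have "fpow (- d) ` fpow d ` S = S"
      using image_fpow_fpow[OF sets.sets_into_space[OF S], of "- d" d] by simp
    then have "ennreal c * emeasure M (fpow d ` S) \<le> emeasure M S"
      using c(2)[OF sets_image_fpow[OF S, of d]] by simp
    then have "ennreal (1 / c) * (ennreal c * emeasure M (fpow d ` S)) \<le> ennreal (1 / c) * emeasure M S"
      by (rule mult_left_mono) simp
    then show ?thesis
      using c(1) by (simp add: mult.assoc[symmetric] ennreal_mult[symmetric])
  qed
  then show ?thesis
    by (intro exI[of _ "ennreal (1 / c)"]) simp
qed

lemma emeasure_image_fpow_le_add: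
  assumes "\<exists>C<\<infinity>. \<forall>S\<in>sets M. emeasure M (fpow i ` S) \<le> C * emeasure M S"
    and "\<exists>D<\<infinity>. \<forall>S\<in>sets M. emeasure M (fpow j ` S) \<le> D * emeasure M S"
  shows "\<exists>E<\<infinity>. \<forall>S\<in>sets M. emeasure M (fpow (i + j) ` S) \<le> E * emeasure M S"
proof -
  obtain C where C: "C < \<infinity>" "\<forall>S\<in>sets M. emeasure M (fpow i ` S) \<le> C * emeasure M S"
    using assms(1) by blast
  obtain D where D: "D < \<infinity>" "\<forall>S\<in>sets M. emeasure M (fpow j ` S) \<le> D * emeasure M S"
    using assms(2) by blast
  have "emeasure M (fpow (i + j) ` S) \<le> (C * D) * emeasure M S" if S: "S \<in> sets M" for S
  proof -
    have "emeasure M (fpow (i + j) ` S) = emeasure M (fpow i ` fpow j ` S)"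
      using image_fpow_fpow[OF sets.sets_into_space[OF S]] by simp
    also have "\<dots> \<le> C * emeasure M (fpow j ` S)"
      using C(2) sets_image_fpow[OF S] by blast
    also have "\<dots> \<le> C * (D * emeasure M S)"
      using D(2) S by (intro mult_left_mono) auto
    finally show ?thesis
      by (simp add: mult.assoc)
  qed
  then show ?thesis
    using C(1) D(1) by (intro exI[of _ "C * D"]) (simp add: ennreal_mult_less_top)
qed

lemma emeasure_image_fpow_le:
  "\<exists>C<\<infinity>. \<forall>S\<in>sets M. emeasure M (fpow j ` S) \<le> C * emeasure M S"
proof (induction j rule: int_induct[where k = 0])
  case base
  show ?case
    by (intro exI[of _ 1]) simp
next
  case (step1 i)
  have "\<exists>D<\<infinity>. \<forall>S\<in>sets M. emeasure M (fpow 1 ` S) \<le> D * emeasure M S"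
    by (rule emeasure_image_fpow_unit_le) simp
  with step1(2) show ?case
    by (rule emeasure_image_fpow_le_add)
next
  case (step2 i)
  have "\<exists>D<\<infinity>. \<forall>S\<in>sets M. emeasure M (fpow (- 1) ` S) \<le> D * emeasure M S"
    by (rule emeasure_image_fpow_unit_le) simp
  with step2(2) show ?case
    using emeasure_image_fpow_le_add[of i "- 1"] by simp
qed

lemma emeasure_image_fpow_eq_0_iff:
  assumes S: "S \<in> sets M"
  shows "emeasure M (fpow j ` S) = 0 \<longleftrightarrow> emeasure M S = 0"
proof -
  have null: "emeasure M (fpow i ` T) = 0" if T: "T \<in> sets M" "emeasure M T = 0" for i T
  proof -
    obtain C where "emeasure M (fpow i ` T) \<le> C * emeasure M T"
      using emeasure_image_fpow_le[of i] T(1) by blast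
    then show ?thesis
      using T(2) by simp
  qed
  have "fpow (- j) ` fpow j ` S = S"
    using image_fpow_fpow[OF sets.sets_into_space[OF S], of "- j" j] by simp
  then show ?thesis
    using null[of S j] null[of "fpow j ` S" "- j"] S sets_image_fpow[OF S] by auto
qed

lemma emeasure_image_fpow_finite:
  assumes "S \<in> sets M" "emeasure M S < \<infinity>"
  shows "emeasure M (fpow j ` S) < \<infinity>"
proof -
  obtain C where C: "C < \<infinity>" "emeasure M (fpow j ` S) \<le> C * emeasure M S"
    using emeasure_image_fpow_le[of j] assms(1) by blast
  have "C * emeasure M S < \<infinity>"
    using C(1) assms(2) by (simp add: ennreal_mult_less_top)
  then show ?thesis
    using C(2) by (rule le_less_trans[rotated])
qed

end

locale bounded_distortion = nonsingular_automorphism +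
  fixes W :: "'a set" and K :: real
  assumes W_sets: "W \<in> sets M" and W_pos: "0 < emeasure M W" and W_finite: "emeasure M W < \<infinity>"
    and K_pos: "K > 0"
    and distortion: "\<forall>(k::int) B. B \<in> sets M \<longrightarrow> B \<subseteq> W \<longrightarrow> 0 < emeasure M B \<longrightarrow>
               ennreal (1 / K) * (emeasure M (fpow k ` W) / emeasure M W)
                 \<le> emeasure M (fpow k ` B) / emeasure M B
             \<and> emeasure M (fpow k ` B) / emeasure M B
                 \<le> ennreal K * (emeasure M (fpow k ` W) / emeasure M W)"
begin

lemma emeasure_image_fpow_eq_measure:
  assumes B: "B \<in> sets M" "B \<subseteq> W"
  shows "emeasure M (fpow j ` B) = ennreal (measure M (fpow j ` B))"
proof -
  have "emeasure M B < \<infinity>"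
    using emeasure_mono[OF B(2) W_sets] W_finite by (rule le_less_trans)
  then show ?thesis
    using emeasure_image_fpow_finite[OF B(1)] by (intro emeasure_eq_ennreal_measure) (simp add: less_top)
qed

lemma emeasure_eq_measure_W: "emeasure M W = ennreal (measure M W)"
  using emeasure_image_fpow_eq_measure[OF W_sets order_refl, of 0] by simp

lemma measure_image_fpow_W_pos: "0 < measure M (fpow j ` W)"
proof -
  have "emeasure M (fpow j ` W) \<noteq> 0"
    using emeasure_image_fpow_eq_0_iff[OF W_sets] W_pos by simp
  then show ?thesis
    using emeasure_image_fpow_eq_measure[OF W_sets order_refl, of j] by (simp add: zero_less_measure_iff)
qed

lemma distortion_measure:
  assumes B: "B \<in> sets M" "B \<subseteq> W"
  shows "measure M (fpow j ` B) * measure M W \<le> K * measure M (fpow j ` W) * measure M B"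
    and "measure M (fpow j ` W) * measure M B \<le> K * measure M (fpow j ` B) * measure M W"
proof -
  define x a w b where "x = measure M (fpow j ` B)" and "a = measure M (fpow j ` W)"
    and "w = measure M W" and "b = measure M B"
  have "x * w \<le> K * a * b \<and> a * b \<le> K * x * w"
  proof (cases "emeasure M B = 0")
    case True
    then have "emeasure M (fpow j ` B) = 0"
      using emeasure_image_fpow_eq_0_iff[OF B(1)] by simp
    then show ?thesis
      using True K_pos by (simp add: x_def b_def measure_def)
  next
    case False
    have b: "emeasure M B = ennreal b"
      using emeasure_image_fpow_eq_measure[OF B, of 0] by (simp add: b_def)
    have "w > 0" and "b > 0" and "a \<ge> 0" "x \<ge> 0"
      using W_pos False emeasure_eq_measure_W b by (auto simp: w_def x_def a_def b_def zero_less_measure_iff)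
    have "0 < emeasure M B"
      using False by (simp add: zero_less_iff_neq_zero)
    then have "ennreal (1 / K) * (emeasure M (fpow j ` W) / emeasure M W) \<le> emeasure M (fpow j ` B) / emeasure M B
        \<and> emeasure M (fpow j ` B) / emeasure M B \<le> ennreal K * (emeasure M (fpow j ` W) / emeasure M W)"
      using distortion B by blast
    moreover have "emeasure M (fpow j ` B) = ennreal x" "emeasure M (fpow j ` W) = ennreal a"
      using emeasure_image_fpow_eq_measure[OF B] emeasure_image_fpow_eq_measure[OF W_sets order_refl]
      by (simp_all add: x_def a_def)
    ultimately have "ennreal (1 / K) * (ennreal a / ennreal w) \<le> ennreal x / ennreal b
        \<and> ennreal x / ennreal b \<le> ennreal K * (ennreal a / ennreal w)"
      using b emeasure_eq_measure_W by (simp add: w_def)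
    then have "(1 / K) * (a / w) \<le> x / b \<and> x / b \<le> K * (a / w)"
      using K_pos \<open>w > 0\<close> \<open>b > 0\<close> \<open>a \<ge> 0\<close> \<open>x \<ge> 0\<close>
      by (simp add: divide_ennreal ennreal_mult[symmetric])
    then show ?thesis
      using K_pos \<open>w > 0\<close> \<open>b > 0\<close> by (simp add: field_simps)
  qed
  then show "x * w \<le> K * a * b" "a * b \<le> K * x * w"
    by auto
qed

lemma measure_image_fpow_le:
  assumes B: "B \<in> sets M" "B \<subseteq> W"
  shows "measure M (fpow j ` B)
    \<le> K\<^sup>2 * (measure M (fpow j ` W) / measure M (fpow i ` W)) * measure M (fpow i ` B)"
proof -
  define xj xi aj ai w b where "xj = measure M (fpow j ` B)" and "xi = measure M (fpow i ` B)"
    and "aj = measure M (fpow j ` W)" and "ai = measure M (fpow i ` W)"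
    and "w = measure M W" and "b = measure M B"
  have "w > 0"
    using measure_image_fpow_W_pos[of 0] by (simp add: w_def)
  have "ai > 0" "aj \<ge> 0"
    using measure_image_fpow_W_pos by (simp_all add: ai_def aj_def)
  have "(xj * w) * ai \<le> (K * aj * b) * ai"
    using distortion_measure(1)[OF B, of j] \<open>ai > 0\<close>
    by (intro mult_right_mono) (simp_all add: xj_def w_def aj_def b_def)
  also have "\<dots> = (K * aj) * (ai * b)"
    by (simp add: ac_simps)
  also have "\<dots> \<le> (K * aj) * (K * xi * w)"
    using distortion_measure(2)[OF B, of i] K_pos \<open>aj \<ge> 0\<close>
    by (intro mult_left_mono) (simp_all add: xi_def w_def ai_def b_def)
  finally have "(xj * ai) * w \<le> (K\<^sup>2 * aj * xi) * w"
    by (simp add: power2_eq_square ac_simps)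
  then have "xj * ai \<le> K\<^sup>2 * aj * xi"
    using \<open>w > 0\<close> by simp
  then show ?thesis
    using \<open>ai > 0\<close> by (simp add: xj_def xi_def aj_def ai_def field_simps)
qed

lemma measure_image_fpow_ge:
  assumes B: "B \<in> sets M" "B \<subseteq> W"
  shows "1 / K\<^sup>2 * (measure M (fpow j ` W) / measure M (fpow i ` W)) * measure M (fpow i ` B)
    \<le> measure M (fpow j ` B)"
  using measure_image_fpow_le[OF B, of i j] measure_image_fpow_W_pos[of i] measure_image_fpow_W_pos[of j] K_pos
  by (simp add: field_simps)

lemma emeasure_vimage_fpow_bounds:
  fixes k n :: int
  assumes C: "C \<in> sets M"
  defines "c \<equiv> emeasure M (fpow k ` W) / emeasure M (fpow (k + n) ` W)"
  shows "emeasure M (fpow n -` C \<inter> fpow k ` W) \<le> ennreal (K\<^sup>2) * c * emeasure M (fpow (k + n) ` W \<inter> C)"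
    and "ennreal (1 / K\<^sup>2) * c * emeasure M (fpow (k + n) ` W \<inter> C) \<le> emeasure M (fpow n -` C \<inter> fpow k ` W)"
proof -
  define B where "B = fpow (k + n) -` C \<inter> W"
  have W_space: "W \<subseteq> space M"
    using W_sets by (rule sets.sets_into_space)
  have "B = (fpow (k + n) -` C \<inter> space M) \<inter> W"
    using W_space by (auto simp: B_def)
  then have B: "B \<in> sets M" "B \<subseteq> W"
    using measurable_sets[OF measurable_fpow C] W_sets by auto
  have "fpow n -` C \<inter> fpow k ` W = fpow k ` B"
    using vimage_fpow_Int_image[OF W_space] by (simp add: B_def)
  moreover have "fpow (k + n) ` W \<inter> C = fpow (k + n) ` B"
    using vimage_fpow_Int_image[OF W_space, of 0 C "k + n"] by (auto simp: B_def)
  moreover have "c = ennreal (measure M (fpow k ` W) / measure M (fpow (k + n) ` W))"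
    using emeasure_image_fpow_eq_measure[OF W_sets order_refl] measure_image_fpow_W_pos
    by (simp add: c_def divide_ennreal)
  ultimately show "emeasure M (fpow n -` C \<inter> fpow k ` W) \<le> ennreal (K\<^sup>2) * c * emeasure M (fpow (k + n) ` W \<inter> C)"
    and "ennreal (1 / K\<^sup>2) * c * emeasure M (fpow (k + n) ` W \<inter> C) \<le> emeasure M (fpow n -` C \<inter> fpow k ` W)"
    using measure_image_fpow_le[OF B, of k "k + n"] measure_image_fpow_ge[OF B, of k "k + n"]
      emeasure_image_fpow_eq_measure[OF B] measure_image_fpow_W_pos
    by (simp_all add: ennreal_mult[symmetric])
qed

lemma nn_set_integral_fpow_bounds:
  fixes k n :: int
  assumes h: "h \<in> borel_measurable M"
  defines "c \<equiv> emeasure M (fpow k ` W) / emeasure M (fpow (k + n) ` W)"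
  shows "ennreal (1 / K\<^sup>2) * c * (\<integral>\<^sup>+ x \<in> fpow (k + n) ` W. h x \<partial>M)
      \<le> (\<integral>\<^sup>+ x \<in> fpow k ` W. h (fpow n x) \<partial>M)"
    and "(\<integral>\<^sup>+ x \<in> fpow k ` W. h (fpow n x) \<partial>M)
      \<le> ennreal (K\<^sup>2) * c * (\<integral>\<^sup>+ x \<in> fpow (k + n) ` W. h x \<partial>M)"
  unfolding c_def
  using nn_set_integral_comp_bounds(2)[OF measurable_fpow sets_image_fpow[OF W_sets]
      sets_image_fpow[OF W_sets] h emeasure_vimage_fpow_bounds(2)]
    nn_set_integral_comp_bounds(1)[OF measurable_fpow sets_image_fpow[OF W_sets]
      sets_image_fpow[OF W_sets] h emeasure_vimage_fpow_bounds(1)]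
  by auto

end

theorem lemma4p1:
  fixes M :: "'a measure" and f g :: "'a \<Rightarrow> 'a" and W :: "'a set" and p :: real
  assumes p: "1 \<le> p"
    and sf: "sigma_finite_measure M"
    and f_meas: "f \<in> measurable M M" and g_meas: "g \<in> measurable M M"
    and gf: "\<And>x. x \<in> space M \<Longrightarrow> g (f x) = x"
    and fg: "\<And>x. x \<in> space M \<Longrightarrow> f (g x) = x"
    and ac_f: "absolutely_continuous M (distr M M g)"
    and ac_finv: "absolutely_continuous M (distr M M f)"
    and rn_f: "\<exists>c>0. AE x in M. ennreal c \<le> RN_deriv M (distr M M g) x"
    and rn_finv: "\<exists>c>0. AE x in M. ennreal c \<le> RN_deriv M (distr M M f) x"
    and W: "W \<in> sets M" "0 < emeasure M W" "emeasure M W < \<infinity>"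
    and cover: "space M = (\<Union>k::int. ipow f g k ` W)"
    and disj: "\<And>j k::int. j \<noteq> k \<Longrightarrow> ipow f g j ` W \<inter> ipow f g k ` W = {}"
    and bd: "\<exists>K>0. \<forall>(k::int) B. B \<in> sets M \<longrightarrow> B \<subseteq> W \<longrightarrow> 0 < emeasure M B \<longrightarrow>
               ennreal (1 / K) * (emeasure M (ipow f g k ` W) / emeasure M W)
                 \<le> emeasure M (ipow f g k ` B) / emeasure M B
             \<and> emeasure M (ipow f g k ` B) / emeasure M B
                 \<le> ennreal K * (emeasure M (ipow f g k ` W) / emeasure M W)"
  shows "\<exists>L::real. L > 0 \<and> (\<forall>(n::int) (k::int) (\<phi>::'a \<Rightarrow> real).
           \<phi> \<in> borel_measurable M \<and> integrable M (\<lambda>x. \<bar>\<phi> x\<bar> powr p) \<longrightarrow>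
             ennreal (1 / L) * (emeasure M (ipow f g k ` W) / emeasure M (ipow f g (k + n) ` W))
                 * (\<integral>\<^sup>+ x \<in> ipow f g (k + n) ` W. ennreal (\<bar>\<phi> x\<bar> powr p) \<partial>M)
               \<le> (\<integral>\<^sup>+ x \<in> ipow f g k ` W. ennreal (\<bar>\<phi> (ipow f g n x)\<bar> powr p) \<partial>M)
           \<and> (\<integral>\<^sup>+ x \<in> ipow f g k ` W. ennreal (\<bar>\<phi> (ipow f g n x)\<bar> powr p) \<partial>M)
               \<le> ennreal L * (emeasure M (ipow f g k ` W) / emeasure M (ipow f g (k + n) ` W))
                 * (\<integral>\<^sup>+ x \<in> ipow f g (k + n) ` W. ennreal (\<bar>\<phi> x\<bar> powr p) \<partial>M))"
proof -
  obtain K where "K > 0" and distortion: "\<forall>(k::int) B. B \<in> sets M \<longrightarrow> B \<subseteq> W \<longrightarrow> 0 < emeasure M B \<longrightarrow>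
               ennreal (1 / K) * (emeasure M (ipow f g k ` W) / emeasure M W)
                 \<le> emeasure M (ipow f g k ` B) / emeasure M B
             \<and> emeasure M (ipow f g k ` B) / emeasure M B
                 \<le> ennreal K * (emeasure M (ipow f g k ` W) / emeasure M W)"
    using bd by blast
  have "measurable_automorphism M f g"
    using f_meas g_meas gf fg by (rule measurable_automorphism.intro)
  then have "nonsingular_automorphism M f g"
    using sf ac_f ac_finv rn_f rn_finv
    by (intro nonsingular_automorphism.intro nonsingular_automorphism_axioms.intro)
  then interpret bounded_distortion M f g W K
    using W \<open>K > 0\<close> distortion by (intro bounded_distortion.intro bounded_distortion_axioms.intro)
  show ?thesis
  proof (intro exI[of _ "K\<^sup>2"] conjI allI impI)
    show "K\<^sup>2 > 0"
      using \<open>K > 0\<close> by simp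
    fix n k :: int and \<phi> :: "'a \<Rightarrow> real"
    assume "\<phi> \<in> borel_measurable M \<and> integrable M (\<lambda>x. \<bar>\<phi> x\<bar> powr p)"
    then have "(\<lambda>x. ennreal (\<bar>\<phi> x\<bar> powr p)) \<in> borel_measurable M"
      by (simp add: borel_measurable_integrable)
    from nn_set_integral_fpow_bounds[OF this, where k = k and n = n]
    show "ennreal (1 / K\<^sup>2) * (emeasure M (fpow k ` W) / emeasure M (fpow (k + n) ` W))
        * (\<integral>\<^sup>+ x \<in> fpow (k + n) ` W. ennreal (\<bar>\<phi> x\<bar> powr p) \<partial>M)
      \<le> (\<integral>\<^sup>+ x \<in> fpow k ` W. ennreal (\<bar>\<phi> (fpow n x)\<bar> powr p) \<partial>M)"
      and "(\<integral>\<^sup>+ x \<in> fpow k ` W. ennreal (\<bar>\<phi> (fpow n x)\<bar> powr p) \<partial>M)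
      \<le> ennreal (K\<^sup>2) * (emeasure M (fpow k ` W) / emeasure M (fpow (k + n) ` W))
        * (\<integral>\<^sup>+ x \<in> fpow (k + n) ` W. ennreal (\<bar>\<phi> x\<bar> powr p) \<partial>M)"
      by simp_all
  qed
qed

end
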